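(* Let $A\subset E$ be nonempty, and suppose that the problem $$\min_L \xi(L)\quad\text{s.t. } L\text{ is a lower contour set in } A$$ admits a solution (a minimizer). Then it has a largest minimizer, i.e. a minimizer $L^\star$ such that every minimizer $L$ satisfies $L\subset L^\star$.
   Context: $E$ is a finite or countably infinite set with a preorder $\precsim$ (reflexive and transitive) such that for every sequence $e_1\succsim e_2\succsim\cdots$ in $E$ there is $N\ge1$ with $e_N\precsim e_n$ for all $n\ge N$. $\pi_0\in(0,1)$; $F_G,F_B$ are probability distributions on $E$ such that every $e\in E$ has $F_G(e)>0$ or $F_B(e)>0$. For nonempty $B\subset E$, $\nu(B)=\frac{F_G(B)\pi_0}{F_G(B)\pi_0+F_B(B)(1-\pi_0)}$ and $\xi(B)=\phi(\nu(B))$, where $\phi:[0,1]\to\mathbb{R}$ is strictly increasing. For nonempty $A\subset E$, a nonempty $L\subset A$ is a lower contour set in $A$ if for all $e\in L$ and $e'\in A$, $e'\precsim e$ implies $e'\in L$. *)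

theory Defs
  imports "HOL-Analysis.Analysis"
begin

definition prob_of :: "('a \<Rightarrow> real) \<Rightarrow> 'a set \<Rightarrow> real" where
  "prob_of p B = infsum p B"

definition nu :: "real \<Rightarrow> ('a \<Rightarrow> real) \<Rightarrow> ('a \<Rightarrow> real) \<Rightarrow> 'a set \<Rightarrow> real" where
  "nu \<pi>0 pG pB B = prob_of pG B * \<pi>0 / (prob_of pG B * \<pi>0 + prob_of pB B * (1 - \<pi>0))"

definition xi :: "(real \<Rightarrow> real) \<Rightarrow> real \<Rightarrow> ('a \<Rightarrow> real) \<Rightarrow> ('a \<Rightarrow> real) \<Rightarrow> 'a set \<Rightarrow> real" where
  "xi \<phi> \<pi>0 pG pB B = \<phi> (nu \<pi>0 pG pB B)"

definition lower_contour :: "('a \<Rightarrow> 'a \<Rightarrow> bool) \<Rightarrow> 'a set \<Rightarrow> 'a set \<Rightarrow> bool" where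
  "lower_contour le A L \<longleftrightarrow> L \<noteq> {} \<and> L \<subseteq> A \<and>
     (\<forall>e\<in>L. \<forall>e'\<in>A. le e' e \<longrightarrow> e' \<in> L)"

definition is_minimizer ::
  "('a \<Rightarrow> 'a \<Rightarrow> bool) \<Rightarrow> ('a set \<Rightarrow> real) \<Rightarrow> 'a set \<Rightarrow> 'a set \<Rightarrow> bool" where
  "is_minimizer le f A L \<longleftrightarrow> lower_contour le A L \<and>
     (\<forall>L'. lower_contour le A L' \<longrightarrow> f L \<le> f L')"

end

theory Submission
  imports Defs
begin

text \<open>Let \<open>m\<close> be the minimal value of \<open>\<nu>\<close> over lower contour sets. Since \<open>\<phi>\<close> is strictly
  increasing, the minimizers are the lower contour sets \<open>L\<close> with \<open>\<nu>(L) \<le> m\<close>, i.e. with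
  \<open>H(L) \<le> 0\<close> for the signed measure \<open>H = \<pi>\<^sub>0 (1 - m) F\<^sub>G - m (1 - \<pi>\<^sub>0) F\<^sub>B\<close>, while
  \<open>H \<ge> 0\<close> on every lower contour set. Lower contour sets are closed under unions and nonempty
  intersections, so inclusion-exclusion shows that minimizers are closed under finite unions.
  As \<open>H\<close> is given by an absolutely summable density, \<open>H\<close> of the union of all minimizers is
  approximated by \<open>H\<close> of single minimizers, so this union is the largest minimizer.\<close>

lemma lower_contour_Un:
  "lower_contour le A L1 \<Longrightarrow> lower_contour le A L2 \<Longrightarrow> lower_contour le A (L1 \<union> L2)"
  unfolding lower_contour_def by blast

lemma lower_contour_Int:
  "lower_contour le A L1 \<Longrightarrow> lower_contour le A L2 \<Longrightarrow> L1 \<inter> L2 \<noteq> {} \<Longrightarrow>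
    lower_contour le A (L1 \<inter> L2)"
  unfolding lower_contour_def by blast

lemma lower_contour_Union:
  "\<LL> \<noteq> {} \<Longrightarrow> (\<And>L. L \<in> \<LL> \<Longrightarrow> lower_contour le A L) \<Longrightarrow> lower_contour le A (\<Union>\<LL>)"
  unfolding lower_contour_def by blast

lemma infsum_le_if_finite_subsets_covered:
  fixes h :: "'a \<Rightarrow> real"
  assumes summable: "h summable_on M"
    and cover: "\<And>F. finite F \<Longrightarrow> F \<subseteq> M \<Longrightarrow> \<exists>U. F \<subseteq> U \<and> U \<subseteq> M \<and> infsum h U \<le> c"
  shows "infsum h M \<le> c"
proof (rule field_le_epsilon)
  fix \<epsilon> :: real
  assume "0 < \<epsilon>"
  define a where "a x = \<bar>h x\<bar>" for x
  have summable_a: "a summable_on B" if "B \<subseteq> M" for B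
    using summable_on_subset_banach[OF summable that] summable_on_iff_abs_summable_on_real
    unfolding a_def by auto
  obtain F where F: "finite F" "F \<subseteq> M" and approx: "dist (sum a F) (infsum a M) \<le> \<epsilon>"
    using infsum_finite_approximation[OF summable_a \<open>0 < \<epsilon>\<close>] by blast
  obtain U where U: "F \<subseteq> U" "U \<subseteq> M" and "infsum h U \<le> c"
    using cover[OF F] by blast
  have "infsum h (M - U) = infsum h M - infsum h U"
    using U summable_on_subset_banach[OF summable] by (intro infsum_Diff) auto
  moreover have "infsum h (M - U) \<le> infsum a (M - F)"
  proof -
    have "infsum h (M - U) \<le> infsum a (M - U)"
      using summable_on_subset_banach[OF summable, of "M - U"] summable_a[of "M - U"]
      by (intro infsum_mono) (auto simp: a_def)
    also have "\<dots> \<le> infsum a (M - F)"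
      using summable_a U by (intro infsum_mono_neutral) (auto simp: a_def)
    finally show ?thesis .
  qed
  moreover have "infsum a (M - F) = infsum a M - sum a F"
    using F summable_a by (subst infsum_Diff) auto
  ultimately show "infsum h M \<le> c + \<epsilon>"
    using approx \<open>infsum h U \<le> c\<close> by (simp add: dist_real_def)
qed

lemma infsum_Un_nonpos_lower_contour:
  fixes h :: "'a \<Rightarrow> real"
  assumes summable: "h summable_on A"
    and nonneg: "\<And>L. lower_contour le A L \<Longrightarrow> 0 \<le> infsum h L"
    and L1: "lower_contour le A L1" "infsum h L1 \<le> 0"
    and L2: "lower_contour le A L2" "infsum h L2 \<le> 0"
  shows "infsum h (L1 \<union> L2) \<le> 0"
proof -
  have "L1 \<subseteq> A" "L2 \<subseteq> A"
    using L1 L2 by (auto simp: lower_contour_def)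
  then have "infsum h (L1 \<union> L2) = infsum h L1 + infsum h L2 - infsum h (L1 \<inter> L2)"
    by (intro infsum_Un_Int summable_on_subset_banach[OF summable]) auto
  moreover have "0 \<le> infsum h (L1 \<inter> L2)"
    using nonneg lower_contour_Int[OF L1(1) L2(1)] by (cases "L1 \<inter> L2 = {}") auto
  ultimately show ?thesis
    using L1 L2 by linarith
qed

lemma Union_nonpos_lower_contours:
  fixes h :: "'a \<Rightarrow> real"
  assumes summable: "h summable_on A"
    and nonneg: "\<And>L. lower_contour le A L \<Longrightarrow> 0 \<le> infsum h L"
    and L0: "lower_contour le A L0" "infsum h L0 \<le> 0"
  defines "M \<equiv> \<Union>{L. lower_contour le A L \<and> infsum h L \<le> 0}"
  shows "lower_contour le A M" and "infsum h M \<le> 0"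
proof -
  show lower_M: "lower_contour le A M"
    unfolding M_def using L0 by (intro lower_contour_Union) auto
  have finite_cover: "\<exists>U. F \<subseteq> U \<and> U \<subseteq> M \<and> infsum h U \<le> 0 \<and> lower_contour le A U"
    if "finite F" "F \<subseteq> M" for F
    using that
  proof (induction F rule: finite_induct)
    case empty
    show ?case
      using L0 unfolding M_def by blast
  next
    case (insert x F)
    then obtain U where U: "F \<subseteq> U" "U \<subseteq> M" "infsum h U \<le> 0" "lower_contour le A U"
      by auto
    obtain L where L: "x \<in> L" "lower_contour le A L" "infsum h L \<le> 0"
      using insert.prems unfolding M_def by auto
    have "infsum h (U \<union> L) \<le> 0"
      by (rule infsum_Un_nonpos_lower_contour[OF summable nonneg U(4,3) L(2,3)])
    moreover have "L \<subseteq> M"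
      using L unfolding M_def by auto
    ultimately show ?case
      using U L lower_contour_Un[OF U(4) L(2)] by (intro exI[of _ "U \<union> L"]) auto
  qed
  show "infsum h M \<le> 0"
  proof (rule infsum_le_if_finite_subsets_covered)
    have "M \<subseteq> A"
      using lower_M by (simp add: lower_contour_def)
    then show "h summable_on M"
      by (rule summable_on_subset_banach[OF summable])
    show "\<exists>U. F \<subseteq> U \<and> U \<subseteq> M \<and> infsum h U \<le> 0" if "finite F" "F \<subseteq> M" for F
      using finite_cover[OF that] by auto
  qed
qed

lemma is_minimizer_comp_strict_mono:
  assumes "strict_mono_on S \<phi>" and "\<And>L. lower_contour le A L \<Longrightarrow> g L \<in> S"
  shows "is_minimizer le (\<lambda>L. \<phi> (g L)) A L \<longleftrightarrow> is_minimizer le g A L"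
  using assms strict_mono_on_less_eq unfolding is_minimizer_def by meson

lemma is_minimizer_iff_le:
  assumes "is_minimizer le g A L0"
  shows "is_minimizer le g A L \<longleftrightarrow> lower_contour le A L \<and> g L \<le> g L0"
  using assms unfolding is_minimizer_def by (meson order_trans)

lemma prob_of_ge_mass:
  assumes "p summable_on B" and "\<And>e. e \<in> B \<Longrightarrow> 0 \<le> p e" and "e \<in> B"
  shows "p e \<le> prob_of p B"
proof -
  have "infsum p {e} \<le> infsum p B"
    using assms by (intro infsum_mono_neutral) auto
  then show ?thesis
    by (simp add: prob_of_def)
qed

lemma prob_of_nonneg:
  "(\<And>e. e \<in> B \<Longrightarrow> 0 \<le> p e) \<Longrightarrow> 0 \<le> prob_of p B"
  unfolding prob_of_def by (rule infsum_nonneg)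

lemma nu_in_unit_interval:
  assumes "0 \<le> prob_of pG B" "0 \<le> prob_of pB B" "0 \<le> \<pi>0" "\<pi>0 \<le> 1"
  shows "nu \<pi>0 pG pB B \<in> {0..1}"
proof -
  have "0 \<le> prob_of pG B * \<pi>0" "0 \<le> prob_of pB B * (1 - \<pi>0)"
    using assms by simp_all
  then show ?thesis
    unfolding nu_def by (cases "prob_of pG B * \<pi>0 + prob_of pB B * (1 - \<pi>0) = 0") simp_all
qed

lemma nu_denominator_pos:
  assumes "pG summable_on B" "pB summable_on B"
    and "\<And>e. e \<in> B \<Longrightarrow> 0 \<le> pG e" "\<And>e. e \<in> B \<Longrightarrow> 0 \<le> pB e"
    and "\<And>e. e \<in> B \<Longrightarrow> pG e > 0 \<or> pB e > 0"
    and "B \<noteq> {}" "0 < \<pi>0" "\<pi>0 < 1"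
  shows "0 < prob_of pG B * \<pi>0 + prob_of pB B * (1 - \<pi>0)"
proof -
  obtain e where e: "e \<in> B"
    using \<open>B \<noteq> {}\<close> by blast
  have "0 < prob_of pG B \<or> 0 < prob_of pB B"
    using prob_of_ge_mass[OF assms(1,3) e] prob_of_ge_mass[OF assms(2,4) e] assms(5)[OF e]
    by linarith
  moreover have "0 \<le> prob_of pG B" "0 \<le> prob_of pB B"
    using assms(3,4) by (simp_all add: prob_of_nonneg)
  ultimately show ?thesis
    using assms(7,8) by (smt (verit) mult_nonneg_nonneg mult_pos_pos)
qed

lemma nu_le_iff:
  assumes "0 < prob_of pG B * \<pi>0 + prob_of pB B * (1 - \<pi>0)"
  shows "nu \<pi>0 pG pB B \<le> m \<longleftrightarrow>
      \<pi>0 * (1 - m) * prob_of pG B - m * (1 - \<pi>0) * prob_of pB B \<le> 0"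
    and "m \<le> nu \<pi>0 pG pB B \<longleftrightarrow>
      0 \<le> \<pi>0 * (1 - m) * prob_of pG B - m * (1 - \<pi>0) * prob_of pB B"
  using assms by (simp_all add: nu_def divide_simps algebra_simps)

lemma has_sum_prob_of_diff:
  assumes "pG summable_on B" "pB summable_on B"
  shows "((\<lambda>e. a * pG e - b * pB e) has_sum (a * prob_of pG B - b * prob_of pB B)) B"
  using has_sum_add[OF has_sum_cmult_right[OF has_sum_infsum[OF assms(1)]]
      has_sum_cmult_right[OF has_sum_infsum[OF assms(2)]], of a "- b"]
  by (simp add: prob_of_def)

theorem lemmaA5:
  fixes E :: "'a set" and le :: "'a \<Rightarrow> 'a \<Rightarrow> bool"
    and pG pB :: "'a \<Rightarrow> real" and \<pi>0 :: real and \<phi> :: "real \<Rightarrow> real"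
    and A :: "'a set"
  assumes countE: "countable E"
    and refl: "\<And>e. e \<in> E \<Longrightarrow> le e e"
    and trans: "\<And>x y z. x \<in> E \<Longrightarrow> y \<in> E \<Longrightarrow> z \<in> E \<Longrightarrow> le x y \<Longrightarrow> le y z \<Longrightarrow> le x z"
    and desc: "\<And>s :: nat \<Rightarrow> 'a. (\<And>n. s n \<in> E) \<Longrightarrow> (\<And>n. le (s (Suc n)) (s n)) \<Longrightarrow>
                 \<exists>N. \<forall>n\<ge>N. le (s N) (s n)"
    and pi0: "0 < \<pi>0" "\<pi>0 < 1"
    and pG_nonneg: "\<And>e. e \<in> E \<Longrightarrow> 0 \<le> pG e"
    and pB_nonneg: "\<And>e. e \<in> E \<Longrightarrow> 0 \<le> pB e"
    and pG_sum: "(pG has_sum 1) E"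
    and pB_sum: "(pB has_sum 1) E"
    and support: "\<And>e. e \<in> E \<Longrightarrow> pG e > 0 \<or> pB e > 0"
    and phi_mono: "strict_mono_on {0..1} \<phi>"
    and A_sub: "A \<subseteq> E" and A_ne: "A \<noteq> {}"
    and ex_min: "\<exists>L. is_minimizer le (xi \<phi> \<pi>0 pG pB) A L"
  shows "\<exists>Ls. is_minimizer le (xi \<phi> \<pi>0 pG pB) A Ls \<and>
           (\<forall>L. is_minimizer le (xi \<phi> \<pi>0 pG pB) A L \<longrightarrow> L \<subseteq> Ls)"
proof -
  have summable_E: "pG summable_on E" "pB summable_on E"
    using pG_sum pB_sum by (auto simp: summable_on_def)
  have summable: "pG summable_on L" "pB summable_on L" if "L \<subseteq> E" for L
    using that by (auto intro: summable_on_subset_banach[OF summable_E(1)]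
        summable_on_subset_banach[OF summable_E(2)])
  have contour_sub: "L \<subseteq> E" "L \<noteq> {}" if "lower_contour le A L" for L
    using that A_sub by (auto simp: lower_contour_def)
  have "nu \<pi>0 pG pB L \<in> {0..1}" if "lower_contour le A L" for L
    using contour_sub[OF that] pG_nonneg pB_nonneg pi0
    by (intro nu_in_unit_interval prob_of_nonneg) auto
  then have minimizer_nu:
    "is_minimizer le (xi \<phi> \<pi>0 pG pB) A L \<longleftrightarrow> is_minimizer le (nu \<pi>0 pG pB) A L" for L
    using is_minimizer_comp_strict_mono[OF phi_mono] unfolding xi_def by blast
  then obtain L0 where L0: "is_minimizer le (nu \<pi>0 pG pB) A L0"
    using ex_min by blast
  define m where "m = nu \<pi>0 pG pB L0"
  define h where "h e = \<pi>0 * (1 - m) * pG e - m * (1 - \<pi>0) * pB e" for e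
  have h_summable: "h summable_on A"
    using has_sum_prob_of_diff[OF summable[OF A_sub]] unfolding h_def summable_on_def by blast
  have h_nu: "nu \<pi>0 pG pB L \<le> m \<longleftrightarrow> infsum h L \<le> 0" "m \<le> nu \<pi>0 pG pB L \<longleftrightarrow> 0 \<le> infsum h L"
    if "lower_contour le A L" for L
  proof -
    have "0 < prob_of pG L * \<pi>0 + prob_of pB L * (1 - \<pi>0)"
      using contour_sub[OF that] pG_nonneg pB_nonneg support pi0
      by (intro nu_denominator_pos summable) auto
    then show "nu \<pi>0 pG pB L \<le> m \<longleftrightarrow> infsum h L \<le> 0" "m \<le> nu \<pi>0 pG pB L \<longleftrightarrow> 0 \<le> infsum h L"
      using nu_le_iff infsumI[OF has_sum_prob_of_diff[OF summable[OF contour_sub(1)[OF that]]]]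
      unfolding h_def[abs_def] by simp_all
  qed
  have h_nonneg: "0 \<le> infsum h L" if "lower_contour le A L" for L
    using L0 that h_nu(2)[OF that] unfolding is_minimizer_def m_def by blast
  have minimizer_iff:
    "is_minimizer le (xi \<phi> \<pi>0 pG pB) A L \<longleftrightarrow> lower_contour le A L \<and> infsum h L \<le> 0" for L
    using minimizer_nu is_minimizer_iff_le[OF L0] h_nu(1) unfolding m_def by blast
  have L0_nonpos: "lower_contour le A L0" "infsum h L0 \<le> 0"
    using L0 minimizer_iff minimizer_nu by blast+
  show ?thesis
    using Union_nonpos_lower_contours[OF h_summable h_nonneg L0_nonpos] minimizer_iff
    by (intro exI[of _ "\<Union>{L. lower_contour le A L \<and> infsum h L \<le> 0}"]) auto
qed

end
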